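(* Let $(X,d)$ be a metric space, $M>0$, $\delta>0$, $f:X\to[0,M]$ a function, $g:X\to[0,\infty)$ a continuous bounded function, and $A\subset X$ a closed set. Define $$\tilde f(x)=\min\Big\{M,\ \inf_{(p_0,\dots,p_n)\in\mathcal{P}(\delta,A,x)} f(p_0)+\sum_{k=0}^{n-1}g(p_k)d(p_k,p_{k+1})\Big\}.$$ Then: (A) $\tilde f:X\to[0,M]$; (B) for each $x\in A$, $0\le\tilde f(x)\le f(x)$; (C) if $x\in A$ and $f(x)=0$ then $\tilde f(x)=0$; (D) for all $x,y\in X$ with $d(x,y)\le\delta$, $|\tilde f(x)-\tilde f(y)|\le\max\{g(x),g(y)\}d(x,y)$; (E) $\mathrm{lip}_a[\tilde f](x)\le g(x)$ for every $x\in X$; (F) $\tilde f$ is $\max\{M\delta^{-1},\sup_{x\in X}g(x)\}$-Lipschitz.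
   Context: A discrete path is a finite sequence $P=(p_0,\dots,p_n)$ of points of $X$ with $n\ge1$; its mesh is $\max_{0\le k\le n-1}d(p_k,p_{k+1})$. For $x\in X$, $\mathcal{P}(\delta,A,x)$ is the set of discrete paths $(p_0,\dots,p_n)$ with mesh at most $\delta$, $p_0\in A$ and $p_n=x$ (the infimum over the empty set is $+\infty$). $\mathrm{lip}_a[h](x)=\lim_{r\to0}\sup_{a\ne b\in B(x,r)}\frac{|h(a)-h(b)|}{d(a,b)}$, and $\mathrm{lip}_a[h](x)=0$ if $x$ is isolated. *)

theory Defs
  imports "HOL-Analysis.Analysis"
begin

text \<open>A discrete path (p_0,...,p_n), n >= 1, is represented by a pair (n, p) with
  p :: nat => 'a; only the values p 0, ..., p n matter.\<close>

definition disc_paths :: "real \<Rightarrow> 'a::metric_space set \<Rightarrow> 'a \<Rightarrow> (nat \<times> (nat \<Rightarrow> 'a)) set" where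
  "disc_paths \<delta> A x = {(n, p). 1 \<le> n \<and> p 0 \<in> A \<and> p n = x \<and>
       (\<forall>k<n. dist (p k) (p (Suc k)) \<le> \<delta>)}"

definition path_cost :: "('a::metric_space \<Rightarrow> real) \<Rightarrow> ('a \<Rightarrow> real) \<Rightarrow> nat \<times> (nat \<Rightarrow> 'a) \<Rightarrow> real" where
  "path_cost f g P = f (snd P 0) + (\<Sum>k<fst P. g (snd P k) * dist (snd P k) (snd P (Suc k)))"

text \<open>min{M, inf ...}, where the infimum over the empty set is +infinity.\<close>
definition ftilde :: "('a::metric_space \<Rightarrow> real) \<Rightarrow> ('a \<Rightarrow> real) \<Rightarrow> real \<Rightarrow> real \<Rightarrow> 'a set \<Rightarrow> 'a \<Rightarrow> real" where
  "ftilde f g M \<delta> A x =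
     real_of_ereal (min (ereal M) (INF P\<in>disc_paths \<delta> A x. ereal (path_cost f g P)))"

definition lip_a :: "('a::metric_space \<Rightarrow> real) \<Rightarrow> 'a \<Rightarrow> ereal" where
  "lip_a h x = (if \<not> x islimpt UNIV then 0 else
     Lim (at_right (0::real))
       (\<lambda>r. SUP (a, b)\<in>{(a, b). a \<in> ball x r \<and> b \<in> ball x r \<and> a \<noteq> b}.
              ereal (\<bar>h a - h b\<bar> / dist a b)))"

end

theory Submission
  imports Defs
begin

text \<open>Appending a point at distance at most \<open>\<delta>\<close> to a path ending at \<open>y\<close> costs \<open>g y \<cdot> d(y,x)\<close>,
  so the infimal path cost, and with it \<open>ftilde\<close>, grows by at most \<open>g y \<cdot> d(x,y)\<close> from \<open>y\<close>
  to \<open>x\<close>. Symmetrising gives the local bound (D) with constant \<open>max (g x) (g y)\<close>; by continuity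
  of \<open>g\<close> this bounds the asymptotic Lipschitz constant (E), and since \<open>ftilde\<close> takes values in
  \<open>[0, M]\<close>, pairs farther apart than \<open>\<delta>\<close> obey the bound \<open>M / \<delta>\<close>, which gives (F). The trivial
  path \<open>(x, x)\<close> gives (B) and (C).\<close>

definition min_path_cost :: "('a::metric_space \<Rightarrow> real) \<Rightarrow> ('a \<Rightarrow> real) \<Rightarrow> real \<Rightarrow> 'a set \<Rightarrow> 'a \<Rightarrow> ereal" where
  "min_path_cost f g \<delta> A x = (INF P\<in>disc_paths \<delta> A x. ereal (path_cost f g P))"

lemma const_path_in_disc_paths:
  assumes "x \<in> A" and "0 \<le> \<delta>"
  shows "(1, \<lambda>_. x) \<in> disc_paths \<delta> A x"
  using assms unfolding disc_paths_def by simp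

lemma disc_paths_snoc:
  assumes "(n, p) \<in> disc_paths \<delta> A y" and "dist y x \<le> \<delta>"
  shows "(Suc n, p(Suc n := x)) \<in> disc_paths \<delta> A x"
  using assms unfolding disc_paths_def by (auto simp: less_Suc_eq)

lemma path_cost_snoc:
  "path_cost f g (Suc n, p(Suc n := x)) = path_cost f g (n, p) + g (p n) * dist (p n) x"
proof -
  have "(\<Sum>k<n. g ((p(Suc n := x)) k) * dist ((p(Suc n := x)) k) ((p(Suc n := x)) (Suc k)))
      = (\<Sum>k<n. g (p k) * dist (p k) (p (Suc k)))"
    by (rule sum.cong) auto
  then show ?thesis
    by (simp add: path_cost_def)
qed

locale nonneg_weights =
  fixes f g :: "'a::metric_space \<Rightarrow> real"
  assumes f_nonneg: "0 \<le> f x" and g_nonneg: "0 \<le> g x"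
begin

lemma path_cost_nonneg: "0 \<le> path_cost f g P"
  unfolding path_cost_def using f_nonneg g_nonneg by (auto intro!: add_nonneg_nonneg sum_nonneg)

lemma min_path_cost_nonneg: "0 \<le> min_path_cost f g \<delta> A x"
  unfolding min_path_cost_def using path_cost_nonneg by (auto intro!: INF_greatest)

lemma ereal_ftilde:
  assumes "0 \<le> M"
  shows "ereal (ftilde f g M \<delta> A x) = min (ereal M) (min_path_cost f g \<delta> A x)"
proof -
  have "\<bar>min (ereal M) (min_path_cost f g \<delta> A x)\<bar> \<noteq> \<infinity>"
    using min_path_cost_nonneg[of \<delta> A x] by (cases "min_path_cost f g \<delta> A x") (auto simp: min_def)
  then show ?thesis
    unfolding ftilde_def min_path_cost_def by (rule ereal_real')
qed

lemma ftilde_bounds: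
  assumes "0 \<le> M"
  shows "0 \<le> ftilde f g M \<delta> A x \<and> ftilde f g M \<delta> A x \<le> M"
proof -
  have "ereal 0 \<le> ereal (ftilde f g M \<delta> A x) \<and> ereal (ftilde f g M \<delta> A x) \<le> ereal M"
    unfolding ereal_ftilde[OF assms] using assms min_path_cost_nonneg[of \<delta> A x]
    by (simp add: zero_ereal_def[symmetric])
  then show ?thesis by simp
qed

lemma ftilde_le_on_A:
  assumes "0 \<le> M" and "x \<in> A" and "0 \<le> \<delta>"
  shows "ftilde f g M \<delta> A x \<le> f x"
proof -
  have "min_path_cost f g \<delta> A x \<le> ereal (path_cost f g (1, \<lambda>_. x))"
    unfolding min_path_cost_def using assms(2,3) by (intro INF_lower const_path_in_disc_paths)
  also have "\<dots> = ereal (f x)"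
    by (simp add: path_cost_def)
  finally have "ereal (ftilde f g M \<delta> A x) \<le> ereal (f x)"
    unfolding ereal_ftilde[OF assms(1)] by (simp add: min.coboundedI2)
  then show ?thesis by simp
qed

lemma min_path_cost_step:
  assumes "dist y x \<le> \<delta>"
  shows "min_path_cost f g \<delta> A x \<le> min_path_cost f g \<delta> A y + ereal (g y * dist y x)"
proof (cases "disc_paths \<delta> A y = {}")
  case True
  then show ?thesis
    by (simp add: min_path_cost_def top_ereal_def)
next
  case False
  have "min_path_cost f g \<delta> A x \<le> ereal (path_cost f g P) + ereal (g y * dist y x)"
    if "P \<in> disc_paths \<delta> A y" for P
  proof -
    obtain n p where P: "P = (n, p)" and "p n = y"
      using \<open>P \<in> disc_paths \<delta> A y\<close> unfolding disc_paths_def by auto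
    have "min_path_cost f g \<delta> A x \<le> ereal (path_cost f g (Suc n, p(Suc n := x)))"
      unfolding min_path_cost_def
      using that assms by (intro INF_lower disc_paths_snoc) (simp_all add: P)
    then show ?thesis
      using \<open>p n = y\<close> by (simp add: path_cost_snoc P)
  qed
  then have "min_path_cost f g \<delta> A x
      \<le> (INF P\<in>disc_paths \<delta> A y. ereal (path_cost f g P) + ereal (g y * dist y x))"
    by (rule INF_greatest)
  also have "\<dots> = min_path_cost f g \<delta> A y + ereal (g y * dist y x)"
    unfolding min_path_cost_def using False path_cost_nonneg
    by (intro INF_ereal_add_left) auto
  finally show ?thesis .
qed

lemma ftilde_step:
  assumes "0 \<le> M" and "dist x y \<le> \<delta>"
  shows "ftilde f g M \<delta> A x \<le> ftilde f g M \<delta> A y + g y * dist x y"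
proof -
  let ?I = "min_path_cost f g \<delta> A"
  have "?I x \<le> ?I y + ereal (g y * dist x y)"
    using min_path_cost_step[of y x \<delta> A] assms(2) by (simp add: dist_commute)
  then have "min (ereal M) (?I x) \<le> min (ereal M) (?I y + ereal (g y * dist x y))"
    by (simp add: min.coboundedI2)
  also have "\<dots> \<le> min (ereal M) (?I y) + ereal (g y * dist x y)"
    using mult_nonneg_nonneg[OF g_nonneg[of y] zero_le_dist[of x y]] by (cases "?I y") (auto simp: min_def)
  finally show ?thesis
    unfolding ereal_ftilde[OF assms(1), symmetric] by simp
qed

lemma ftilde_local_lipschitz:
  assumes "0 \<le> M" and "dist x y \<le> \<delta>"
  shows "\<bar>ftilde f g M \<delta> A x - ftilde f g M \<delta> A y\<bar> \<le> max (g x) (g y) * dist x y"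
proof -
  have "ftilde f g M \<delta> A x \<le> ftilde f g M \<delta> A y + g y * dist x y"
    using assms by (rule ftilde_step)
  moreover have "ftilde f g M \<delta> A y \<le> ftilde f g M \<delta> A x + g x * dist x y"
    using ftilde_step[of M y x \<delta> A] assms by (simp add: dist_commute)
  moreover have "g y * dist x y \<le> max (g x) (g y) * dist x y"
    and "g x * dist x y \<le> max (g x) (g y) * dist x y"
    by (simp_all add: mult_right_mono)
  ultimately show ?thesis
    by (simp add: abs_le_iff)
qed

end

lemma tendsto_at_right_0_INF:
  fixes F :: "real \<Rightarrow> 'b::{complete_linorder,linorder_topology}"
  assumes mono: "\<And>r s. 0 < r \<Longrightarrow> r \<le> s \<Longrightarrow> F r \<le> F s"
  shows "(F \<longlongrightarrow> (INF r\<in>{0<..}. F r)) (at_right 0)"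
proof (rule order_tendstoI)
  fix a assume "a < (INF r\<in>{0<..}. F r)"
  then show "eventually (\<lambda>r. a < F r) (at_right 0)"
    unfolding eventually_at_right_field
    by (intro exI[of _ 1]) (auto intro: less_le_trans INF_lower)
next
  fix a assume "(INF r\<in>{0<..}. F r) < a"
  then obtain s where "0 < s" and "F s < a"
    by (auto simp: INF_less_iff)
  then show "eventually (\<lambda>r. F r < a) (at_right 0)"
    unfolding eventually_at_right_field
    by (intro exI[of _ s]) (auto intro: le_less_trans[OF mono[of _ s]])
qed

lemma lip_a_eq_INF:
  assumes "x islimpt UNIV"
  shows "lip_a h x = (INF r\<in>{0<..}. SUP (a, b)\<in>{(a, b). a \<in> ball x r \<and> b \<in> ball x r \<and> a \<noteq> b}.
      ereal (\<bar>h a - h b\<bar> / dist a b))"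
  unfolding lip_a_def using assms
  by (auto intro!: tendsto_Lim tendsto_at_right_0_INF SUP_subset_mono)

lemma lip_a_leI:
  assumes "0 \<le> c"
    and "\<And>e. 0 < e \<Longrightarrow> \<exists>r>0. \<forall>a\<in>ball x r. \<forall>b\<in>ball x r.
           a \<noteq> b \<longrightarrow> \<bar>h a - h b\<bar> / dist a b \<le> c + e"
  shows "lip_a h x \<le> ereal c"
proof (cases "x islimpt UNIV")
  case False
  then show ?thesis
    using assms(1) by (simp add: lip_a_def)
next
  case True
  show ?thesis
  proof (rule ereal_le_epsilon2)
    fix e :: real assume "0 < e"
    then obtain r where "0 < r" and r: "\<forall>a\<in>ball x r. \<forall>b\<in>ball x r.
        a \<noteq> b \<longrightarrow> \<bar>h a - h b\<bar> / dist a b \<le> c + e"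
      using assms(2) by blast
    have "lip_a h x \<le> (SUP (a, b)\<in>{(a, b). a \<in> ball x r \<and> b \<in> ball x r \<and> a \<noteq> b}.
        ereal (\<bar>h a - h b\<bar> / dist a b))"
      unfolding lip_a_eq_INF[OF True] using \<open>0 < r\<close> by (auto intro: INF_lower)
    also have "\<dots> \<le> ereal (c + e)"
      using r by (auto intro!: SUP_least)
    finally show "lip_a h x \<le> ereal c + ereal e"
      by simp
  qed
qed

lemma lip_a_le_of_local_lipschitz:
  fixes h g :: "'a::metric_space \<Rightarrow> real"
  assumes "0 < \<delta>" and "0 \<le> g x" and "isCont g x"
    and local: "\<And>a b. dist a b \<le> \<delta> \<Longrightarrow> \<bar>h a - h b\<bar> \<le> max (g a) (g b) * dist a b"
  shows "lip_a h x \<le> ereal (g x)"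
proof (rule lip_a_leI[OF \<open>0 \<le> g x\<close>])
  fix e :: real assume "0 < e"
  then obtain d where "0 < d" and d: "\<And>z. dist z x < d \<Longrightarrow> \<bar>g z - g x\<bar> < e"
    using \<open>isCont g x\<close> unfolding continuous_at_eps_delta dist_real_def by blast
  define r where "r = min d (\<delta> / 2)"
  have "\<bar>h a - h b\<bar> / dist a b \<le> g x + e"
    if "a \<in> ball x r" and "b \<in> ball x r" and "a \<noteq> b" for a b
  proof -
    have "dist a b \<le> dist x a + dist x b"
      by (rule dist_triangle3)
    then have "dist a b \<le> \<delta>" and "dist a x < d" and "dist b x < d"
      using that by (auto simp: r_def dist_commute)
    then have "\<bar>h a - h b\<bar> \<le> (g x + e) * dist a b"
      using local d[of a] d[of b] by (smt (verit) mult_right_mono zero_le_dist)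
    then show ?thesis
      using \<open>a \<noteq> b\<close> by (simp add: divide_le_eq)
  qed
  moreover have "0 < r"
    using \<open>0 < d\<close> \<open>0 < \<delta>\<close> by (simp add: r_def)
  ultimately show "\<exists>r>0. \<forall>a\<in>ball x r. \<forall>b\<in>ball x r. a \<noteq> b \<longrightarrow> \<bar>h a - h b\<bar> / dist a b \<le> g x + e"
    by blast
qed

lemma lipschitz_on_of_bounded_local_lipschitz:
  fixes h :: "'a::metric_space \<Rightarrow> real"
  assumes "0 < \<delta>" and "0 \<le> L" and bounds: "\<And>x. 0 \<le> h x \<and> h x \<le> M"
    and local: "\<And>x y. dist x y \<le> \<delta> \<Longrightarrow> \<bar>h x - h y\<bar> \<le> L * dist x y"
  shows "(max (M / \<delta>) L)-lipschitz_on UNIV h"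
proof (rule lipschitz_onI)
  show "0 \<le> max (M / \<delta>) L"
    using \<open>0 \<le> L\<close> by simp
  fix x y
  show "dist (h x) (h y) \<le> max (M / \<delta>) L * dist x y"
  proof (cases "dist x y \<le> \<delta>")
    case True
    then have "dist (h x) (h y) \<le> L * dist x y"
      using local by (simp add: dist_real_def)
    also have "\<dots> \<le> max (M / \<delta>) L * dist x y"
      by (simp add: mult_right_mono)
    finally show ?thesis .
  next
    case False
    have "dist (h x) (h y) \<le> M"
      using bounds[of x] bounds[of y] by (simp add: dist_real_def abs_le_iff)
    also have "\<dots> \<le> M / \<delta> * dist x y"
      using False \<open>0 < \<delta>\<close> bounds[of x] by (simp add: field_simps mult_left_mono)
    also have "\<dots> \<le> max (M / \<delta>) L * dist x y"
      by (intro mult_right_mono) auto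
    finally show ?thesis .
  qed
qed

theorem lemma2p4:
  fixes f g :: "'a::metric_space \<Rightarrow> real" and M \<delta> :: real and A :: "'a set"
  assumes "M > 0" and "\<delta> > 0"
    and "\<And>x. 0 \<le> f x \<and> f x \<le> M"
    and "\<And>x. 0 \<le> g x" and "continuous_on UNIV g" and "bounded (range g)"
    and "closed A"
  defines "ft \<equiv> ftilde f g M \<delta> A"
  shows "(\<forall>x. 0 \<le> ft x \<and> ft x \<le> M)
    \<and> (\<forall>x\<in>A. 0 \<le> ft x \<and> ft x \<le> f x)
    \<and> (\<forall>x\<in>A. f x = 0 \<longrightarrow> ft x = 0)
    \<and> (\<forall>x y. dist x y \<le> \<delta> \<longrightarrow> \<bar>ft x - ft y\<bar> \<le> max (g x) (g y) * dist x y)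
    \<and> (\<forall>x. lip_a ft x \<le> ereal (g x))
    \<and> ((max (M / \<delta>) (SUP x. g x))-lipschitz_on UNIV ft)"
proof -
  interpret nonneg_weights f g
    using assms(3,4) by unfold_locales auto
  have "0 \<le> M"
    using assms(1) by simp
  have bounds: "\<And>x. 0 \<le> ft x \<and> ft x \<le> M"
    unfolding ft_def using \<open>0 \<le> M\<close> by (rule ftilde_bounds)
  moreover have on_A: "\<forall>x\<in>A. 0 \<le> ft x \<and> ft x \<le> f x"
    unfolding ft_def using ftilde_bounds ftilde_le_on_A \<open>0 \<le> M\<close> \<open>\<delta> > 0\<close> by auto
  moreover have "\<forall>x\<in>A. f x = 0 \<longrightarrow> ft x = 0"
    using on_A by force
  moreover have local: "\<And>x y. dist x y \<le> \<delta> \<Longrightarrow> \<bar>ft x - ft y\<bar> \<le> max (g x) (g y) * dist x y"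
    unfolding ft_def using \<open>0 \<le> M\<close> by (rule ftilde_local_lipschitz)
  moreover have "lip_a ft x \<le> ereal (g x)" for x
    using \<open>\<delta> > 0\<close> g_nonneg assms(5) local
    by (intro lip_a_le_of_local_lipschitz) (auto simp: continuous_on_eq_continuous_at)
  moreover have "(max (M / \<delta>) (SUP x. g x))-lipschitz_on UNIV ft"
  proof (rule lipschitz_on_of_bounded_local_lipschitz[OF \<open>\<delta> > 0\<close> _ bounds])
    have "g x \<le> (SUP x. g x)" for x
      using bounded_imp_bdd_above[OF assms(6)] by (rule cSUP_upper[OF UNIV_I])
    then show "0 \<le> (SUP x. g x)"
      using g_nonneg order_trans by blast
    show "\<bar>ft x - ft y\<bar> \<le> (SUP x. g x) * dist x y" if "dist x y \<le> \<delta>" for x y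
      using local[OF that] \<open>\<And>x. g x \<le> (SUP x. g x)\<close>
      by (smt (verit) max.bounded_iff mult_right_mono zero_le_dist)
  qed
  ultimately show ?thesis
    by blast
qed

end
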